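(* Let $(V,E^+\uplus E^-)$ be a Correlation Clustering instance with optimum cost $\mathrm{opt}$, let $\mathcal C$ be a clustering of $V$ with $\mathrm{obj}(\mathcal C)\le3\,\mathrm{opt}$, and let $\mathcal K$ be the partition of $V$ constructed from $\mathcal C$ as described in the context (with $\beta=0.1$). Let $\mathcal C^*$ be an optimum clustering (i.e. $\mathrm{obj}(\mathcal C^* )=\mathrm{opt}$). Then every atom $K\in\mathcal K$ is contained in a single cluster of $\mathcal C^*$.
   Context: A Correlation Clustering instance consists of a finite vertex set $V$ and a partition $E^+\uplus E^-=\binom V2$ of unordered pairs of distinct vertices into $+$edges and $-$edges. For a clustering (partition) $\mathcal C$ of $V$, $\mathrm{obj}(\mathcal C)$ is the number of $+$edges between different parts plus the number of $-$edges inside parts; $\mathrm{opt}$ is its minimum. By convention every vertex has a $+$ self-loop, so the set $N^+_u$ of $+$neighbours of $u$ contains $u$. $A\triangle B$ denotes symmetric difference. Construction of $\mathcal K$ with $\beta=0.1$: for every non-singleton $C\in\mathcal C$, mark every $u\in C$ with $|N^+_u\triangle C|>\frac\beta2|C|$, and then, if at least $\frac{\beta|C|}{3}$ vertices of $C$ are marked, mark all vertices of $C$. $\mathcal K$ is obtained from $\mathcal C$ by removing every marked vertex from its cluster and making it a singleton cluster. The parts of $\mathcal K$ are called atoms. *)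

theory Defs
  imports Complex_Main "HOL-Library.Disjoint_Sets"
begin

text \<open>A Correlation Clustering instance: finite vertex set V and the set Epos of +edges,
  each an unordered pair (2-element subset) of V. All other pairs of distinct vertices are -edges.\<close>

definition cc_instance :: "'a set \<Rightarrow> 'a set set \<Rightarrow> bool" where
  "cc_instance V Epos \<longleftrightarrow> finite V \<and> (\<forall>e\<in>Epos. e \<subseteq> V \<and> card e = 2)"

definition pairs :: "'a set \<Rightarrow> 'a set set" where
  "pairs V = {e. e \<subseteq> V \<and> card e = 2}"

abbreviation clustering :: "'a set \<Rightarrow> 'a set set \<Rightarrow> bool" where
  "clustering V C \<equiv> partition_on V C"

definition obj :: "'a set \<Rightarrow> 'a set set \<Rightarrow> 'a set set \<Rightarrow> nat" where
  "obj V Epos C =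
     card {e \<in> pairs V. e \<in> Epos \<and> \<not> (\<exists>X\<in>C. e \<subseteq> X)}
   + card {e \<in> pairs V. e \<notin> Epos \<and> (\<exists>X\<in>C. e \<subseteq> X)}"

definition opt :: "'a set \<Rightarrow> 'a set set \<Rightarrow> nat" where
  "opt V Epos = Min (obj V Epos ` {C. clustering V C})"

definition Npos :: "'a set \<Rightarrow> 'a set set \<Rightarrow> 'a \<Rightarrow> 'a set" where
  "Npos V Epos u = {v \<in> V. v = u \<or> {u, v} \<in> Epos}"

definition beta :: real where "beta = 1/10"

definition premarked :: "'a set \<Rightarrow> 'a set set \<Rightarrow> 'a set \<Rightarrow> 'a set" where
  "premarked V Epos Cl = {u \<in> Cl. real (card (sym_diff (Npos V Epos u) Cl)) > beta / 2 * real (card Cl)}"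

definition marked_in :: "'a set \<Rightarrow> 'a set set \<Rightarrow> 'a set \<Rightarrow> 'a set" where
  "marked_in V Epos Cl =
     (if card Cl \<le> 1 then {}
      else if real (card (premarked V Epos Cl)) \<ge> beta * real (card Cl) / 3 then Cl
      else premarked V Epos Cl)"

definition marked :: "'a set \<Rightarrow> 'a set set \<Rightarrow> 'a set set \<Rightarrow> 'a set" where
  "marked V Epos C = (\<Union>Cl\<in>C. marked_in V Epos Cl)"

definition atoms :: "'a set \<Rightarrow> 'a set set \<Rightarrow> 'a set set \<Rightarrow> 'a set set" where
  "atoms V Epos C =
     {Cl - marked V Epos C | Cl. Cl \<in> C \<and> Cl - marked V Epos C \<noteq> {}}
   \<union> {{u} | u. u \<in> marked V Epos C}"

end

theory Submission
  imports Defs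
begin

text \<open>
  An optimal clustering cannot be improved by moving a vertex set \<open>S\<close> into another cluster or
  into a cluster of its own. Counting, for each \<open>u \<in> S\<close>, its disagreements inside \<open>S\<close> once and
  those leaving \<open>S\<close> twice, this says that some vertex of \<open>S\<close> does not gain by the move.

  An unmarked atom is \<open>K = Cl - P\<close> with \<open>|P| < |Cl|/30\<close> and \<open>|N\<^sup>+\<^sub>u \<triangle> Cl| \<le> |Cl|/20\<close> for
  all \<open>u \<in> K\<close>. Isolating \<open>K\<close> shows that some \<open>u \<in> K\<close> has all but \<open>|Cl|/10 + 2|P|\<close> vertices of \<open>K\<close>
  in its optimal cluster \<open>X\<close>; isolating \<open>K \<inter> X\<close> shows that \<open>X\<close> has at most that many vertices
  outside \<open>K\<close>; hence \<open>X\<close> is so dense in \<open>K\<close> that every vertex of \<open>K - X\<close> would strictly gain by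
  moving into \<open>X\<close>, so \<open>K \<subseteq> X\<close>. Marked atoms are singletons.
\<close>

definition same_cluster :: "'a set set \<Rightarrow> 'a \<Rightarrow> 'a \<Rightarrow> bool" where
  "same_cluster C u v \<longleftrightarrow> (\<exists>X\<in>C. u \<in> X \<and> v \<in> X)"

definition disagree :: "'a set set \<Rightarrow> 'a set set \<Rightarrow> 'a \<Rightarrow> 'a \<Rightarrow> bool" where
  "disagree Epos C u v \<longleftrightarrow> u \<noteq> v \<and> ({u, v} \<in> Epos \<longleftrightarrow> \<not> same_cluster C u v)"

lemma disagree_commute: "disagree Epos C u v \<longleftrightarrow> disagree Epos C v u"
  unfolding disagree_def same_cluster_def by (auto simp: insert_commute)

lemma card_le_add_if_subset_Un:
  assumes "finite B" "finite C" "A \<subseteq> B \<union> C"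
  shows "card A \<le> card B + card C"
  using assms card_Un_le card_mono finite_UnI order_trans by meson

lemma card_pairs_filter_double:
  assumes "finite V"
  shows "2 * card {e \<in> pairs V. Q e} = card {(u, v) \<in> V \<times> V. u \<noteq> v \<and> Q {u, v}}"
proof -
  let ?E = "{e \<in> pairs V. Q e}"
  let ?orient = "\<lambda>e. {(u, v). u \<noteq> v \<and> {u, v} = e}"
  have "finite ?E"
    using assms unfolding pairs_def by (auto intro: finite_subset[of _ "Pow V"])
  have card_orient: "card (?orient e) = 2" if "e \<in> ?E" for e
  proof -
    have "card e = 2" using that unfolding pairs_def by simp
    then obtain a b where "e = {a, b}" "a \<noteq> b" by (meson card_2_iff)
    then have "?orient e = {(a, b), (b, a)}" by (auto simp: doubleton_eq_iff)
    with \<open>a \<noteq> b\<close> show ?thesis by simp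
  qed
  have "{(u, v) \<in> V \<times> V. u \<noteq> v \<and> Q {u, v}} = (\<Union>e\<in>?E. ?orient e)"
    unfolding pairs_def by auto
  also have "card \<dots> = (\<Sum>e\<in>?E. card (?orient e))"
    using \<open>finite ?E\<close> card_orient by (intro card_UN_disjoint) (auto intro: card_ge_0_finite)
  also have "\<dots> = 2 * card ?E"
    using card_orient by simp
  finally show ?thesis by simp
qed

lemma obj_double_count:
  assumes "finite V"
  shows "2 * obj V Epos C = card {(u, v) \<in> V \<times> V. disagree Epos C u v}"
proof -
  let ?bad = "\<lambda>e. e \<in> Epos \<longleftrightarrow> \<not> (\<exists>X\<in>C. e \<subseteq> X)"
  have "finite (pairs V)"
    using assms unfolding pairs_def by (auto intro: finite_subset[of _ "Pow V"])
  then have "obj V Epos C = card {e \<in> pairs V. ?bad e}"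
    unfolding obj_def by (subst card_Un_disjoint[symmetric]) (auto intro: arg_cong[where f = card])
  also have "2 * \<dots> = card {(u, v) \<in> V \<times> V. u \<noteq> v \<and> ?bad {u, v}}"
    by (rule card_pairs_filter_double[OF assms])
  also have "{(u, v) \<in> V \<times> V. u \<noteq> v \<and> ?bad {u, v}} = {(u, v) \<in> V \<times> V. disagree Epos C u v}"
    unfolding disagree_def same_cluster_def by auto
  finally show ?thesis .
qed

lemma card_pairs_filter_eq_sum:
  assumes "finite A" "finite B"
  shows "card {(u, v) \<in> A \<times> B. R u v} = (\<Sum>u\<in>A. card {v \<in> B. R u v})"
proof -
  have "{(u, v) \<in> A \<times> B. R u v} = (SIGMA u:A. {v \<in> B. R u v})" by auto
  then show ?thesis using assms by simp
qed

lemma card_pairs_filter_split_symmetric: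
  assumes "finite V" "S \<subseteq> V" and sym: "\<And>u v. R u v \<longleftrightarrow> R v u"
  shows "card {(u, v) \<in> V \<times> V. R u v} =
    card {(u, v) \<in> S \<times> S. R u v} + 2 * card {(u, v) \<in> S \<times> (V - S). R u v}
    + card {(u, v) \<in> (V - S) \<times> (V - S). R u v}"
proof -
  define pairs_in where "pairs_in A B = {(u, v) \<in> A \<times> B. R u v}" for A B
  have fin: "finite (pairs_in A B)" if "A \<subseteq> V" "B \<subseteq> V" for A B
    using assms(1) that unfolding pairs_in_def
    by (auto intro: finite_subset[of _ "V \<times> V"])
  have "pairs_in (V - S) S = prod.swap ` pairs_in S (V - S)"
    unfolding pairs_in_def using sym by auto
  then have swap: "card (pairs_in (V - S) S) = card (pairs_in S (V - S))"
    by (simp add: card_image)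
  have card_Un: "card (pairs_in A B \<union> pairs_in A' B') = card (pairs_in A B) + card (pairs_in A' B')"
    if "A \<union> A' \<subseteq> V" "B \<union> B' \<subseteq> V" "A \<times> B \<inter> A' \<times> B' = {}" for A B A' B'
    using that fin by (intro card_Un_disjoint) (auto simp: pairs_in_def)
  have "pairs_in V V = pairs_in S V \<union> pairs_in (V - S) V"
    unfolding pairs_in_def using assms(2) by auto
  then have rows: "card (pairs_in V V) = card (pairs_in S V) + card (pairs_in (V - S) V)"
    using assms(2) by (simp only:) (rule card_Un; auto)
  have cols: "card (pairs_in A V) = card (pairs_in A S) + card (pairs_in A (V - S))"
    if "A \<subseteq> V" for A
  proof -
    have "pairs_in A V = pairs_in A S \<union> pairs_in A (V - S)"
      unfolding pairs_in_def using assms(2) by auto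
    then show ?thesis
      using assms(2) that by (simp only:) (rule card_Un; auto)
  qed
  from rows cols[OF assms(2)] cols[of "V - S"] swap show ?thesis
    unfolding pairs_in_def by simp
qed

lemma same_cluster_iff_mem:
  assumes "partition_on V C" "X \<in> C" "u \<in> X"
  shows "same_cluster C u v \<longleftrightarrow> v \<in> X"
  using assms partition_onD2[OF assms(1)] unfolding same_cluster_def disjoint_def by blast

lemma disagreements_of_vertex:
  assumes "partition_on V C" "X \<in> C" "u \<in> X" "B \<subseteq> V"
  shows "{v \<in> B. disagree Epos C u v} = sym_diff (Npos V Epos u) X \<inter> B"
proof -
  have "u \<in> V" using assms(1-3) partition_onD1 by blast
  then show ?thesis
    using assms(3,4) same_cluster_iff_mem[OF assms(1-3)]
    unfolding disagree_def Npos_def by (auto simp: insert_commute)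
qed

definition cluster_of :: "'a set set \<Rightarrow> 'a \<Rightarrow> 'a set" where
  "cluster_of C u = (THE X. X \<in> C \<and> u \<in> X)"

lemma cluster_of_eq:
  assumes "partition_on V C" "X \<in> C" "u \<in> X"
  shows "cluster_of C u = X"
  unfolding cluster_of_def
proof (rule the_equality)
  show "\<And>Z. Z \<in> C \<and> u \<in> Z \<Longrightarrow> Z = X"
    using assms partition_onD2[OF assms(1)] unfolding disjoint_def by blast
qed (use assms in blast)

lemma cluster_of_mem:
  assumes "partition_on V C" "u \<in> V"
  shows "cluster_of C u \<in> C" "u \<in> cluster_of C u"
proof -
  obtain X where "X \<in> C" "u \<in> X" using assms partition_onD1 by blast
  then show "cluster_of C u \<in> C" "u \<in> cluster_of C u"
    using cluster_of_eq[OF assms(1)] by simp_all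
qed

lemma disagreements_touching_eq_sum:
  assumes "finite V" "partition_on V C" "S \<subseteq> V"
    and cluster: "\<And>u. u \<in> S \<Longrightarrow> cl u \<in> C \<and> u \<in> cl u"
  shows "card {(u, v) \<in> S \<times> S. disagree Epos C u v}
           + 2 * card {(u, v) \<in> S \<times> (V - S). disagree Epos C u v}
         = (\<Sum>u\<in>S. card (sym_diff (Npos V Epos u) (cl u) \<inter> S)
             + 2 * card (sym_diff (Npos V Epos u) (cl u) - S))"
proof -
  have fin_S: "finite S" and fin_V_S: "finite (V - S)"
    using finite_subset[OF assms(3,1)] assms(1) by auto
  have "{v \<in> S. disagree Epos C u v} = sym_diff (Npos V Epos u) (cl u) \<inter> S"
    and "{v \<in> V - S. disagree Epos C u v} = sym_diff (Npos V Epos u) (cl u) - S"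
    if "u \<in> S" for u
  proof -
    note vertex = disagreements_of_vertex[OF assms(2) cluster[OF that, THEN conjunct1]
        cluster[OF that, THEN conjunct2]]
    show "{v \<in> S. disagree Epos C u v} = sym_diff (Npos V Epos u) (cl u) \<inter> S"
      using vertex[OF assms(3)] .
    have "cl u \<subseteq> V" using cluster[OF that] partition_onD1[OF assms(2)] by blast
    moreover have "Npos V Epos u \<subseteq> V" unfolding Npos_def by blast
    moreover have "{v \<in> V - S. disagree Epos C u v} = sym_diff (Npos V Epos u) (cl u) \<inter> (V - S)"
      using vertex[of "V - S"] by blast
    ultimately show "{v \<in> V - S. disagree Epos C u v} = sym_diff (Npos V Epos u) (cl u) - S"
      by auto
  qed
  then show ?thesis
    unfolding card_pairs_filter_eq_sum[OF fin_S fin_S] card_pairs_filter_eq_sum[OF fin_S fin_V_S]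
    by (simp add: sum.distrib sum_distrib_left)
qed

text \<open>With \<open>Y = {}\<close> the set \<open>S\<close> becomes a cluster of its own.\<close>

definition move_into :: "'a set set \<Rightarrow> 'a set \<Rightarrow> 'a set \<Rightarrow> 'a set set" where
  "move_into C S Y = {X - S | X. X \<in> C \<and> X \<noteq> Y \<and> X - S \<noteq> {}} \<union> {S \<union> Y}"

lemma partition_on_move_into:
  assumes "partition_on V C" "S \<subseteq> V" "S \<noteq> {}" "Y \<in> C \<or> Y = {}"
  shows "partition_on V (move_into C S Y)"
proof (rule partition_onI)
  have V: "V = \<Union>C" and disj: "disjoint C" using assms(1) partition_onD1 partition_onD2 by auto
  show "\<Union>(move_into C S Y) = V"
  proof
    show "\<Union>(move_into C S Y) \<subseteq> V" using V assms(2,4) unfolding move_into_def by auto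
    show "V \<subseteq> \<Union>(move_into C S Y)"
    proof
      fix x assume "x \<in> V"
      then obtain X where "X \<in> C" "x \<in> X" using V by blast
      then show "x \<in> \<Union>(move_into C S Y)"
        unfolding move_into_def by (cases "x \<in> S \<or> X = Y") auto
    qed
  qed
  show "{} \<notin> move_into C S Y" using assms(3) unfolding move_into_def by auto
  show "disjnt p q" if "p \<in> move_into C S Y" "q \<in> move_into C S Y" "p \<noteq> q" for p q
    using that assms(4) disj unfolding move_into_def disjnt_def disjoint_def by (auto; blast)
qed

lemma same_cluster_move_into:
  assumes "Y \<in> C \<or> Y = {}" "u \<notin> S" "v \<notin> S"
  shows "same_cluster (move_into C S Y) u v \<longleftrightarrow> same_cluster C u v"
proof
  assume "same_cluster (move_into C S Y) u v"
  then show "same_cluster C u v"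
    using assms unfolding same_cluster_def move_into_def by auto
next
  assume "same_cluster C u v"
  then obtain X where X: "X \<in> C" "u \<in> X" "v \<in> X" unfolding same_cluster_def by blast
  show "same_cluster (move_into C S Y) u v"
  proof (cases "X = Y")
    case True
    then show ?thesis using X unfolding same_cluster_def move_into_def by auto
  next
    case False
    then have "X - S \<in> move_into C S Y" using X assms(2) unfolding move_into_def by auto
    then show ?thesis using X assms(2,3) unfolding same_cluster_def by blast
  qed
qed

locale optimal_clustering =
  fixes V :: "'a set" and Epos :: "'a set set" and Cs :: "'a set set"
  assumes finite_V: "finite V"
    and partition: "partition_on V Cs"
    and optimal: "\<And>C. partition_on V C \<Longrightarrow> obj V Epos Cs \<le> obj V Epos C"
begin

abbreviation N :: "'a \<Rightarrow> 'a set" where "N \<equiv> Npos V Epos"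

lemma N_subset: "N u \<subseteq> V"
  unfolding Npos_def by auto

lemma finite_N: "finite (N u)"
  using finite_subset[OF N_subset finite_V] .

lemma cluster_subset: "X \<in> Cs \<Longrightarrow> X \<subseteq> V"
  using partition_onD1[OF partition] by blast

lemma finite_cluster: "X \<in> Cs \<Longrightarrow> finite X"
  using cluster_subset finite_V finite_subset by blast

lemma move_into_not_cheaper:
  assumes "S \<subseteq> V" "S \<noteq> {}" "Y \<in> Cs \<or> Y = {}"
  defines "M \<equiv> move_into Cs S Y"
  shows "card {(u, v) \<in> S \<times> S. disagree Epos Cs u v}
           + 2 * card {(u, v) \<in> S \<times> (V - S). disagree Epos Cs u v}
         \<le> card {(u, v) \<in> S \<times> S. disagree Epos M u v}
           + 2 * card {(u, v) \<in> S \<times> (V - S). disagree Epos M u v}"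
proof -
  have "obj V Epos Cs \<le> obj V Epos M"
    unfolding M_def using optimal partition_on_move_into[OF partition assms(1-3)] by blast
  moreover have "{(u, v) \<in> (V - S) \<times> (V - S). disagree Epos M u v}
      = {(u, v) \<in> (V - S) \<times> (V - S). disagree Epos Cs u v}"
    unfolding M_def disagree_def using same_cluster_move_into[OF assms(3)] by auto
  moreover have "2 * obj V Epos C = card {(u, v) \<in> S \<times> S. disagree Epos C u v}
      + 2 * card {(u, v) \<in> S \<times> (V - S). disagree Epos C u v}
      + card {(u, v) \<in> (V - S) \<times> (V - S). disagree Epos C u v}" for C
    unfolding obj_double_count[OF finite_V]
    using finite_V assms(1) disagree_commute by (rule card_pairs_filter_split_symmetric)
  ultimately show ?thesis
    by (metis (no_types, lifting) add_le_cancel_right mult_le_cancel1)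
qed

lemma exists_vertex_not_gaining_by_move:
  assumes "S \<subseteq> V" "S \<noteq> {}" "Y \<in> Cs \<or> Y = {}"
  shows "\<exists>u\<in>S. card (sym_diff (N u) (cluster_of Cs u) \<inter> S)
                 + 2 * card (sym_diff (N u) (cluster_of Cs u) - S)
               \<le> card (S - N u) + 2 * card (sym_diff (N u) Y - S)"
proof (rule ccontr)
  let ?M = "move_into Cs S Y"
  have "partition_on V ?M" and "S \<union> Y \<in> ?M"
    using partition_on_move_into[OF partition assms] unfolding move_into_def by auto
  have "cluster_of Cs u \<in> Cs \<and> u \<in> cluster_of Cs u" if "u \<in> S" for u
    using cluster_of_mem[OF partition] that assms(1) by blast
  note old = disagreements_touching_eq_sum[OF finite_V partition assms(1) this, of Epos]
  have "S \<union> Y \<in> ?M \<and> u \<in> S \<union> Y" if "u \<in> S" for u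
    using \<open>S \<union> Y \<in> ?M\<close> that by blast
  note new = disagreements_touching_eq_sum[OF finite_V \<open>partition_on V ?M\<close> assms(1) this, of Epos]
  assume "\<not> ?thesis"
  then have "(\<Sum>u\<in>S. card (S - N u) + 2 * card (sym_diff (N u) Y - S))
      < (\<Sum>u\<in>S. card (sym_diff (N u) (cluster_of Cs u) \<inter> S)
                 + 2 * card (sym_diff (N u) (cluster_of Cs u) - S))"
    using finite_subset[OF assms(1) finite_V] assms(2) by (intro sum_strict_mono) auto
  also have "\<dots> \<le> (\<Sum>u\<in>S. card (sym_diff (N u) (S \<union> Y) \<inter> S) + 2 * card (sym_diff (N u) (S \<union> Y) - S))"
    using move_into_not_cheaper[OF assms] old new by linarith
  also have "\<dots> = (\<Sum>u\<in>S. card (S - N u) + 2 * card (sym_diff (N u) Y - S))"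
    by (intro sum.cong refl arg_cong2[where f = "(+)"] arg_cong[where f = "\<lambda>A. 2 * card A"]
        arg_cong[where f = card]) auto
  finally show False by simp
qed

end

locale dense_core = optimal_clustering +
  fixes Cl P :: "'a set"
  assumes Cl_subset: "Cl \<subseteq> V" and P_subset: "P \<subseteq> Cl"
    and P_small: "real (card P) < real (card Cl) / 30"
    and close_to_Cl: "\<And>u. u \<in> Cl - P \<Longrightarrow> real (card (sym_diff (Npos V Epos u) Cl)) \<le> real (card Cl) / 20"
begin

abbreviation K :: "'a set" where "K \<equiv> Cl - P"
abbreviation n :: real where "n \<equiv> real (card Cl)"
abbreviation p :: real where "p \<equiv> real (card P)"

lemma finite_Cl: "finite Cl"
  using Cl_subset finite_V finite_subset by blast

lemma card_K: "real (card K) = n - p"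
  using finite_Cl P_subset by (simp add: card_Diff_subset card_mono finite_subset of_nat_diff)

lemma close_to_Cl_split: "u \<in> K \<Longrightarrow> real (card (Cl - N u)) + real (card (N u - Cl)) \<le> n / 20"
  using close_to_Cl[of u] finite_Cl finite_N[of u]
  by (simp add: card_Un_disjoint Un_commute Int_Diff_disjoint Diff_Int_distrib2)

lemma card_N_minus_K: "card (N u - K) \<le> card (N u - Cl) + card P"
  using finite_N finite_Cl P_subset
  by (intro card_le_add_if_subset_Un) (auto intro: finite_subset)

lemma exists_vertex_mostly_with_core:
  assumes "K \<noteq> {}"
  shows "\<exists>u\<in>K. real (card (K - cluster_of Cs u)) \<le> n / 10 + 2 * p"
proof -
  have "K \<subseteq> V" using Cl_subset by blast
  then obtain u where "u \<in> K" and no_gain: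
    "card (sym_diff (N u) (cluster_of Cs u) \<inter> K) + 2 * card (sym_diff (N u) (cluster_of Cs u) - K)
      \<le> card (K - N u) + 2 * card (N u - K)"
    using exists_vertex_not_gaining_by_move[of K "{}"] assms by auto
  have "card (K - cluster_of Cs u) \<le> card (sym_diff (N u) (cluster_of Cs u) \<inter> K) + card (K - N u)"
    using finite_N finite_Cl by (intro card_le_add_if_subset_Un) auto
  moreover have "card (K - N u) \<le> card (Cl - N u)"
    using finite_Cl by (intro card_mono) auto
  ultimately have "real (card (K - cluster_of Cs u)) \<le> n / 10 + 2 * p"
    using no_gain card_N_minus_K[of u] close_to_Cl_split[OF \<open>u \<in> K\<close>] by linarith
  with \<open>u \<in> K\<close> show ?thesis ..
qed

lemma cluster_meeting_core_mostly_inside: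
  assumes "X \<in> Cs" "K \<inter> X \<noteq> {}"
  shows "real (card (X - K)) \<le> n / 10 + 2 * p"
proof -
  let ?A = "K \<inter> X" and ?R = "X - K"
  have fin_X: "finite X" using finite_cluster[OF assms(1)] .
  have "?A \<subseteq> V" using Cl_subset by blast
  then obtain u where "u \<in> ?A" and no_gain:
    "card (sym_diff (N u) (cluster_of Cs u) \<inter> ?A) + 2 * card (sym_diff (N u) (cluster_of Cs u) - ?A)
      \<le> card (?A - N u) + 2 * card (N u - ?A)"
    using exists_vertex_not_gaining_by_move[of ?A "{}"] assms by auto
  have "u \<in> K" using \<open>u \<in> ?A\<close> by blast
  have "cluster_of Cs u = X" using cluster_of_eq[OF partition assms(1)] \<open>u \<in> ?A\<close> by blast
  then have "sym_diff (N u) (cluster_of Cs u) \<inter> ?A = ?A - N u"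
    by auto
  then have "card (sym_diff (N u) (cluster_of Cs u) \<inter> ?A) = card (?A - N u)"
    by simp
  moreover have "card (N u - X) + card (?R - N u) \<le> card (sym_diff (N u) (cluster_of Cs u) - ?A)"
    using \<open>cluster_of Cs u = X\<close> finite_N fin_X
    by (subst card_Un_disjoint[symmetric]) (auto intro!: card_mono)
  moreover have "card (N u - ?A) \<le> card (N u - X) + card (N u \<inter> ?R)"
    using finite_N by (intro card_le_add_if_subset_Un) auto
  moreover have "card ?R = card (N u \<inter> ?R) + card (?R - N u)"
    using fin_X card_Int_Diff[of ?R "N u"] by (simp add: Int_commute)
  moreover have "card (N u \<inter> ?R) \<le> card (N u - K)"
    using finite_N by (intro card_mono) auto
  ultimately show ?thesis
    using no_gain card_N_minus_K[of u] close_to_Cl_split[OF \<open>u \<in> K\<close>] by linarith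
qed

lemma core_subset_cluster:
  assumes "X \<in> Cs" "real (card (K - X)) \<le> n / 10 + 2 * p" "real (card (X - K)) \<le> n / 10 + 2 * p"
  shows "K \<subseteq> X"
proof (rule ccontr)
  let ?A = "K \<inter> X" and ?B = "K - X" and ?R = "X - K"
  assume "\<not> K \<subseteq> X"
  moreover have "?B \<subseteq> V" using Cl_subset by blast
  ultimately obtain u where "u \<in> ?B" and no_gain:
    "card (sym_diff (N u) (cluster_of Cs u) \<inter> ?B) + 2 * card (sym_diff (N u) (cluster_of Cs u) - ?B)
      \<le> card (?B - N u) + 2 * card (sym_diff (N u) X - ?B)"
    using exists_vertex_not_gaining_by_move[of ?B X] assms(1) by blast
  have fin_X: "finite X" using finite_cluster[OF assms(1)] .
  have "u \<in> K" "u \<in> V" using \<open>u \<in> ?B\<close> Cl_subset by auto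
  note own = cluster_of_mem[OF partition \<open>u \<in> V\<close>]
  have "cluster_of Cs u \<inter> X = {}"
    using own assms(1) \<open>u \<in> ?B\<close> partition_onD2[OF partition] unfolding disjoint_def by blast
  moreover have "finite (cluster_of Cs u)" using finite_cluster[OF own(1)] .
  ultimately have "card (N u \<inter> ?A) \<le> card (sym_diff (N u) (cluster_of Cs u) - ?B)"
    using finite_N by (intro card_mono) auto
  moreover have "card ?A = card (N u \<inter> ?A) + card (?A - N u)"
    using finite_Cl card_Int_Diff[of ?A "N u"] by (simp add: Int_commute)
  moreover have "card (?A - N u) \<le> card (Cl - N u)" and "card (?B - N u) \<le> card (Cl - N u)"
    using finite_Cl by (auto intro: card_mono)
  moreover have "card (sym_diff (N u) X - ?B) \<le> card (N u - K) + card (X - N u)"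
    using finite_N fin_X by (intro card_le_add_if_subset_Un) auto
  moreover have "card (X - N u) \<le> card (Cl - N u) + card ?R"
    using finite_Cl fin_X by (intro card_le_add_if_subset_Un) auto
  moreover have "card K = card ?A + card ?B"
    using finite_Cl by (intro card_Int_Diff) simp
  ultimately show False
    using no_gain assms(2,3) card_K card_N_minus_K[of u] close_to_Cl_split[OF \<open>u \<in> K\<close>] P_small
    by linarith
qed

lemma core_in_one_cluster:
  assumes "K \<noteq> {}"
  shows "\<exists>X\<in>Cs. K \<subseteq> X"
proof -
  obtain u where "u \<in> K" and mostly_with: "real (card (K - cluster_of Cs u)) \<le> n / 10 + 2 * p"
    using exists_vertex_mostly_with_core[OF assms] by blast
  have "u \<in> V" using \<open>u \<in> K\<close> Cl_subset by blast
  note own = cluster_of_mem[OF partition this]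
  have "real (card (cluster_of Cs u - K)) \<le> n / 10 + 2 * p"
    using own \<open>u \<in> K\<close> by (intro cluster_meeting_core_mostly_inside) blast+
  then show ?thesis
    using core_subset_cluster[OF own(1) mostly_with] own(1) by blast
qed

end

lemma marked_in_subset: "marked_in V Epos Cl \<subseteq> Cl"
  unfolding marked_in_def premarked_def by auto

lemma marked_subset:
  assumes "partition_on V C"
  shows "marked V Epos C \<subseteq> V"
proof
  fix u assume "u \<in> marked V Epos C"
  then obtain Cl where "Cl \<in> C" "u \<in> marked_in V Epos Cl"
    unfolding marked_def by blast
  then show "u \<in> V" using marked_in_subset[of V Epos Cl] partition_onD1[OF assms] by blast
qed

lemma cluster_minus_marked:
  assumes "partition_on V C" "Cl \<in> C"
  shows "Cl - marked V Epos C = Cl - marked_in V Epos Cl"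
proof -
  have "marked_in V Epos Cl' \<inter> Cl = {}" if "Cl' \<in> C" "Cl' \<noteq> Cl" for Cl'
    using marked_in_subset[of V Epos Cl'] that assms partition_onD2[OF assms(1)]
    unfolding disjoint_def by blast
  then show ?thesis unfolding marked_def using assms(2) by blast
qed

lemma optimal_clustering_if_obj_eq_opt:
  assumes "finite V" "partition_on V Cs" "obj V Epos Cs = opt V Epos"
  shows "optimal_clustering V Epos Cs"
proof
  show "obj V Epos Cs \<le> obj V Epos C" if "partition_on V C" for C
    unfolding assms(3) opt_def using assms(1) that finitely_many_partition_on by (intro Min_le) auto
qed (fact assms)+

context optimal_clustering
begin

lemma unmarked_part_in_one_cluster:
  assumes "Cl \<subseteq> V" and nonempty: "Cl - marked_in V Epos Cl \<noteq> {}"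
  shows "\<exists>X\<in>Cs. Cl - marked_in V Epos Cl \<subseteq> X"
proof (cases "card Cl \<le> 1")
  case True
  have "finite Cl" using assms(1) finite_V finite_subset by blast
  moreover have "Cl \<noteq> {}" using nonempty by blast
  ultimately have "card Cl = 1" using True by (simp add: card_gt_0_iff le_Suc_eq)
  then obtain u where "Cl = {u}" by (rule card_1_singletonE)
  moreover have "marked_in V Epos Cl = {}" using True by (simp add: marked_in_def)
  ultimately show ?thesis
    using cluster_of_mem[OF partition, of u] assms(1) by auto
next
  case False
  let ?P = "premarked V Epos Cl"
  have "\<not> real (card ?P) \<ge> beta * real (card Cl) / 3"
    using False nonempty unfolding marked_in_def by auto
  then have marked: "marked_in V Epos Cl = ?P" and P_small: "real (card ?P) < real (card Cl) / 30"
    using False unfolding marked_in_def beta_def by auto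
  have close: "real (card (sym_diff (N u) Cl)) \<le> real (card Cl) / 20" if "u \<in> Cl - ?P" for u
    using that unfolding premarked_def beta_def by auto
  have "?P \<subseteq> Cl" unfolding premarked_def by blast
  with assms(1) P_small close have "dense_core V Epos Cs Cl ?P"
    by (intro dense_core.intro optimal_clustering_axioms dense_core_axioms.intro)
  from dense_core.core_in_one_cluster[OF this] show ?thesis
    using nonempty marked by simp
qed

end

theorem lemma8:
  fixes V :: "'a set" and Epos :: "'a set set" and C Cstar :: "'a set set"
  assumes "cc_instance V Epos"
    and "clustering V C"
    and "obj V Epos C \<le> 3 * opt V Epos"
    and "clustering V Cstar"
    and "obj V Epos Cstar = opt V Epos"
  shows "\<forall>K \<in> atoms V Epos C. \<exists>X \<in> Cstar. K \<subseteq> X"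
proof
  fix K assume "K \<in> atoms V Epos C"
  have "finite V" using assms(1) unfolding cc_instance_def by blast
  interpret optimal_clustering V Epos Cstar
    using optimal_clustering_if_obj_eq_opt \<open>finite V\<close> assms(4,5) .
  from \<open>K \<in> atoms V Epos C\<close> consider
      (marked) u where "K = {u}" "u \<in> marked V Epos C"
    | (unmarked) Cl where "Cl \<in> C" "K = Cl - marked V Epos C" "K \<noteq> {}"
    unfolding atoms_def by blast
  then show "\<exists>X \<in> Cstar. K \<subseteq> X"
  proof cases
    case marked
    then have "u \<in> V" using marked_subset[OF assms(2)] by blast
    note own = cluster_of_mem[OF partition this]
    have "K \<subseteq> cluster_of Cstar u" using own(2) marked(1) by simp
    with own(1) show ?thesis ..
  next
    case unmarked
    then have "Cl \<subseteq> V" using partition_onD1[OF assms(2)] by blast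
    moreover have "K = Cl - marked_in V Epos Cl"
      using unmarked(2) cluster_minus_marked[OF assms(2) unmarked(1)] by simp
    ultimately show ?thesis
      using unmarked_part_in_one_cluster unmarked(3) by simp
  qed
qed

end
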